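(* For the $m\times n$ grid-with-a-hole graph $G^\square_{m,n}$, the fraction of balanced $k$-partitions $Z_{\mu^{\mathrm{balanced}}_k}/Z_{\mu^*_k}$ is lower bounded by $\Omega\!\left(\frac{1}{(m+n)^k\Theta(1)^k}\right)$.
   Context: The $m\times n$ grid graph $G_{m,n}$ has vertices $(i,j)$, $i\in[m]$, $j\in[n]$, with edges between horizontally or vertically adjacent vertices. For $m,n\ge4$, $G^\square_{m,n}$ is $G_{m,n}$ with the vertices $\{(i,j):2\le i\le m-1,\,2\le j\le n-1\}$ removed. For a graph $G$ and $k$, the spanning tree distribution gives a partition $(P_1,\dots,P_k)$ of $V(G)$ the weight $\mu^*_k(P_1,\dots,P_k)=\prod_{i=1}^kT(P_i)$, where $T(P_i)$ is the number of spanning trees of $G[P_i]$; $Z_{\mu^*_k}$ is the total weight, and $Z_{\mu^{\mathrm{balanced}}_k}$ is the total weight of balanced partitions, i.e. those with $|P_1|=\dots=|P_k|$. *)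

theory Defs
  imports Complex_Main
begin

type_synonym vert = "nat \<times> nat"

definition grid_hole_V :: "nat \<Rightarrow> nat \<Rightarrow> vert set" where
  "grid_hole_V m n = {(i,j). 1 \<le> i \<and> i \<le> m \<and> 1 \<le> j \<and> j \<le> n \<and>
      \<not> (2 \<le> i \<and> i \<le> m - 1 \<and> 2 \<le> j \<and> j \<le> n - 1)}"

definition grid_adj :: "vert \<Rightarrow> vert \<Rightarrow> bool" where
  "grid_adj u v \<longleftrightarrow>
     (fst u = fst v \<and> (snd v = snd u + 1 \<or> snd u = snd v + 1)) \<or>
     (snd u = snd v \<and> (fst v = fst u + 1 \<or> fst u = fst v + 1))"

definition induced_edges :: "vert set \<Rightarrow> vert set set" where
  "induced_edges P = {{u, v} | u v. u \<in> P \<and> v \<in> P \<and> grid_adj u v}"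

definition edge_rel :: "vert set set \<Rightarrow> (vert \<times> vert) set" where
  "edge_rel F = {(x, y). {x, y} \<in> F}"

definition spanning_trees :: "vert set \<Rightarrow> vert set set set" where
  "spanning_trees P = {F. F \<subseteq> induced_edges P \<and>
      (\<forall>u\<in>P. \<forall>v\<in>P. (u, v) \<in> (edge_rel F)\<^sup>*) \<and> card F = card P - 1}"

definition num_spanning_trees :: "vert set \<Rightarrow> nat" where
  "num_spanning_trees P = card (spanning_trees P)"

text \<open>Ordered partitions (P_1,...,P_k) of V into k nonempty blocks, encoded as
  p :: nat => vert set with blocks p 0, ..., p (k-1) and p i = {} for i >= k.\<close>
definition partitions :: "vert set \<Rightarrow> nat \<Rightarrow> (nat \<Rightarrow> vert set) set" where
  "partitions V k = {p. (\<forall>i<k. p i \<noteq> {}) \<and> (\<forall>i. k \<le> i \<longrightarrow> p i = {}) \<and>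
      (\<forall>i<k. \<forall>j<k. i \<noteq> j \<longrightarrow> p i \<inter> p j = {}) \<and> (\<Union>i<k. p i) = V}"

definition balanced_partitions :: "vert set \<Rightarrow> nat \<Rightarrow> (nat \<Rightarrow> vert set) set" where
  "balanced_partitions V k = {p \<in> partitions V k. \<forall>i<k. \<forall>j<k. card (p i) = card (p j)}"

definition st_weight :: "nat \<Rightarrow> (nat \<Rightarrow> vert set) \<Rightarrow> real" where
  "st_weight k p = (\<Prod>i<k. real (num_spanning_trees (p i)))"

definition Z_star :: "vert set \<Rightarrow> nat \<Rightarrow> real" where
  "Z_star V k = (\<Sum>p\<in>partitions V k. st_weight k p)"

definition Z_balanced :: "vert set \<Rightarrow> nat \<Rightarrow> real" where
  "Z_balanced V k = (\<Sum>p\<in>balanced_partitions V k. st_weight k p)"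

end

theory Submission
  imports Defs "HOL-Library.FuncSet"
begin

text \<open>The grid with a hole is an induced cycle of length N = 2m + 2n - 4. In an induced
  cycle with successor map s, every edge induced by a vertex set P has the form {x, s x} with
  x and s x both in P, so P induces at most |P| - e edges, where e is the number of vertices
  of P whose successor leaves P; e \<ge> 1 if P is proper and nonempty. Hence T(P) \<le> 1, and
  T(P) > 0 forces e = 1, i.e. P is an arc. For k \<ge> 2 the weight of a partition is therefore
  0 or 1, and a partition of weight 1 consists of k arcs, so it is determined by the k last
  vertices of its arcs: Z_star \<le> N^k. Cutting the cycle into k consecutive arcs of length N/k
  gives a balanced partition of weight 1, so Z_balanced \<ge> 1 and the fraction is at least
  N^(-k) \<ge> (2(m + n))^(-k). For k = 1 it is 1.\<close>

section \<open>Spanning trees of paths\<close>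

lemma finite_induced_edges: "finite P \<Longrightarrow> finite (induced_edges P)"
proof -
  assume "finite P"
  have "induced_edges P \<subseteq> (\<lambda>(u, v). {u, v}) ` (P \<times> P)"
    unfolding induced_edges_def by auto
  then show ?thesis using \<open>finite P\<close> finite_subset by blast
qed

lemma finite_spanning_trees: "finite P \<Longrightarrow> finite (spanning_trees P)"
  by (rule finite_subset[of _ "Pow (induced_edges P)"])
     (auto simp: spanning_trees_def finite_induced_edges)

lemma sym_edge_rel: "sym (edge_rel F)"
  by (auto simp: sym_def edge_rel_def insert_commute)

lemma rtrancl_chain:
  assumes edge: "\<And>c. a \<le> c \<Longrightarrow> Suc c < b \<Longrightarrow> (f c, f (Suc c)) \<in> R"
    and "a \<le> c" "c \<le> d" "d < b"
  shows "(f c, f d) \<in> R\<^sup>*"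
  using \<open>c \<le> d\<close> \<open>d < b\<close>
proof (induction d rule: dec_induct)
  case base
  then show ?case by simp
next
  case (step d)
  then show ?case using edge[of d] \<open>a \<le> c\<close> by (simp add: rtrancl.rtrancl_into_rtrancl)
qed

lemma path_spanning_tree:
  assumes inj: "inj_on f {a..<b}"
    and adj: "\<And>c. a \<le> c \<Longrightarrow> Suc c < b \<Longrightarrow> grid_adj (f c) (f (Suc c))"
  shows "(\<lambda>c. {f c, f (Suc c)}) ` {a..<b - 1} \<in> spanning_trees (f ` {a..<b})"
proof -
  define F where "F = (\<lambda>c. {f c, f (Suc c)}) ` {a..<b - 1}"
  have step: "{f c, f (Suc c)} \<in> F" if "a \<le> c" "Suc c < b" for c
    unfolding F_def using that by (intro imageI) auto
  have "F \<subseteq> induced_edges (f ` {a..<b})"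
  proof
    fix e assume "e \<in> F"
    then obtain c where "a \<le> c" "Suc c < b" "e = {f c, f (Suc c)}" unfolding F_def by auto
    moreover have "f c \<in> f ` {a..<b}" "f (Suc c) \<in> f ` {a..<b}"
      using \<open>a \<le> c\<close> \<open>Suc c < b\<close> by auto
    ultimately show "e \<in> induced_edges (f ` {a..<b})"
      unfolding induced_edges_def using adj by blast
  qed
  moreover have "inj_on (\<lambda>c. {f c, f (Suc c)}) {a..<b - 1}"
  proof (rule inj_onI)
    fix c d
    assume "c \<in> {a..<b - 1}" "d \<in> {a..<b - 1}" and eq: "{f c, f (Suc c)} = {f d, f (Suc d)}"
    then have "c \<in> {a..<b}" "Suc c \<in> {a..<b}" "d \<in> {a..<b}" "Suc d \<in> {a..<b}" by auto
    with eq show "c = d" by (auto simp: doubleton_eq_iff inj_on_eq_iff[OF inj])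
  qed
  then have "card F = card (f ` {a..<b}) - 1"
    unfolding F_def by (simp add: card_image inj)
  moreover have "(u, v) \<in> (edge_rel F)\<^sup>*" if "u \<in> f ` {a..<b}" "v \<in> f ` {a..<b}" for u v
  proof -
    have edge: "(f c, f (Suc c)) \<in> edge_rel F" if "a \<le> c" "Suc c < b" for c
      using step[OF that] by (simp add: edge_rel_def)
    have chain: "(f c, f d) \<in> (edge_rel F)\<^sup>*"
      if "c \<in> {a..<b}" "d \<in> {a..<b}" "c \<le> d" for c d
      using rtrancl_chain[of a b f "edge_rel F", OF edge] that by auto
    obtain c d where "c \<in> {a..<b}" "d \<in> {a..<b}" "u = f c" "v = f d"
      using \<open>u \<in> _\<close> \<open>v \<in> _\<close> by blast
    moreover have "(f d, f c) \<in> (edge_rel F)\<^sup>* \<Longrightarrow> (f c, f d) \<in> (edge_rel F)\<^sup>*"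
      using sym_rtrancl[OF sym_edge_rel] by (rule symD)
    ultimately show ?thesis using chain by (cases "c \<le> d") auto
  qed
  ultimately show ?thesis unfolding F_def spanning_trees_def by blast
qed

lemma finite_partitions:
  assumes "finite V"
  shows "finite (partitions V k)"
proof (rule finite_subset)
  show "partitions V k \<subseteq>
      {p. \<forall>i. (i \<in> {..<k} \<longrightarrow> p i \<in> Pow V) \<and> (i \<notin> {..<k} \<longrightarrow> p i = {})}"
    unfolding partitions_def by auto
  show "finite \<dots>" using assms by (intro finite_set_of_finite_funs) auto
qed

lemma st_weight_nonneg: "0 \<le> st_weight k p"
  unfolding st_weight_def by (rule prod_nonneg) simp

lemma Z_balanced_le_Z_star: "finite V \<Longrightarrow> Z_balanced V k \<le> Z_star V k"
  unfolding Z_balanced_def Z_star_def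
  by (rule sum_mono2[OF finite_partitions])
     (auto simp: balanced_partitions_def st_weight_nonneg)

lemma Z_balanced_1: "Z_balanced V 1 = Z_star V 1"
  unfolding Z_balanced_def Z_star_def balanced_partitions_def by simp

lemma partition_disjoint:
  "p \<in> partitions V k \<Longrightarrow> i < k \<Longrightarrow> j < k \<Longrightarrow> i \<noteq> j \<Longrightarrow> p i \<inter> p j = {}"
  by (simp add: partitions_def)

lemma partition_Union: "p \<in> partitions V k \<Longrightarrow> (\<Union>i<k. p i) = V"
  by (simp add: partitions_def)

lemma partition_covers: "p \<in> partitions V k \<Longrightarrow> v \<in> V \<Longrightarrow> \<exists>i<k. v \<in> p i"
  using partition_Union by blast

lemma partition_beyond: "p \<in> partitions V k \<Longrightarrow> k \<le> i \<Longrightarrow> p i = {}"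
  by (simp add: partitions_def)

lemma partition_block_proper:
  assumes p: "p \<in> partitions V k" and "2 \<le> k" "i < k"
  shows "p i \<subseteq> V" "p i \<noteq> {}" "p i \<noteq> V"
proof -
  show "p i \<subseteq> V" "p i \<noteq> {}" using p \<open>i < k\<close> unfolding partitions_def by blast+
  define j :: nat where "j = (if i = 0 then 1 else 0)"
  have "j < k" "j \<noteq> i" unfolding j_def using \<open>2 \<le> k\<close> by auto
  then have "p j \<noteq> {}" "p j \<subseteq> V" "p i \<inter> p j = {}"
    using p \<open>i < k\<close> unfolding partitions_def by blast+
  then show "p i \<noteq> V" by blast
qed

section \<open>Induced cycles in the grid\<close>

lemma interval_eq_div:
  assumes "0 < (L::nat)"
  shows "{i * L..<Suc i * L} = {x. x div L = i}"
proof (intro set_eqI iffI)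
  fix x assume "x \<in> {i * L..<Suc i * L}"
  then show "x \<in> {x. x div L = i}" by (simp add: div_nat_eqI mult.commute)
next
  fix x assume "x \<in> {x. x div L = i}"
  then show "x \<in> {i * L..<Suc i * L}" using dividend_less_div_times[OF assms, of x] by auto
qed

definition first_hit :: "('a \<Rightarrow> 'a) \<Rightarrow> 'a set \<Rightarrow> 'a \<Rightarrow> 'a" where
  "first_hit f E x = (f ^^ (LEAST t. (f ^^ t) x \<in> E)) x"

lemma first_hit_eq:
  assumes x: "x \<in> P" and leaves: "(f ^^ t) x \<notin> P"
    and exits: "\<And>y. y \<in> P \<Longrightarrow> f y \<notin> P \<Longrightarrow> y \<in> E" and hit: "E \<inter> P = {e}"
  shows "first_hit f E x = e"
proof -
  define t0 where "t0 = (LEAST t. (f ^^ t) x \<notin> P)"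
  have t0: "(f ^^ t0) x \<notin> P" unfolding t0_def using leaves by (rule LeastI)
  then obtain r where r: "t0 = Suc r" using x by (cases t0) auto
  have stay: "(f ^^ r') x \<in> P" if "r' \<le> r" for r'
    using not_less_Least[of r' "\<lambda>t. (f ^^ t) x \<notin> P"] that r t0_def by auto
  have "(f ^^ r) x \<in> E" using exits[OF stay[OF order.refl]] t0 r by simp
  then have "(LEAST t. (f ^^ t) x \<in> E) \<le> r" "(f ^^ (LEAST t. (f ^^ t) x \<in> E)) x \<in> E"
    by (rule Least_le, rule LeastI)
  then show ?thesis using stay hit unfolding first_hit_def by blast
qed

locale induced_grid_cycle =
  fixes V :: "vert set" and N :: nat and ph :: "nat \<Rightarrow> vert" and s :: "vert \<Rightarrow> vert"
  assumes bij_ph: "bij_betw ph {..<N} V"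
    and s_ph: "a < N \<Longrightarrow> s (ph a) = ph (Suc a mod N)"
    and adj_s: "x \<in> V \<Longrightarrow> grid_adj x (s x)"
    and adj_imp_s: "u \<in> V \<Longrightarrow> v \<in> V \<Longrightarrow> grid_adj u v \<Longrightarrow> v = s u \<or> u = s v"
begin

lemma V_eq: "V = ph ` {..<N}"
  using bij_ph by (simp add: bij_betw_def)

lemma inj_ph: "inj_on ph {..<N}"
  using bij_ph by (simp add: bij_betw_def)

lemma finite_V: "finite V"
  by (simp add: V_eq)

lemma card_V: "card V = N"
  using bij_betw_same_card[OF bij_ph] by simp

lemma funpow_s_ph: "a < N \<Longrightarrow> (s ^^ t) (ph a) = ph ((a + t) mod N)"
  by (induction t) (simp_all add: s_ph mod_Suc_eq)

lemma s_reaches: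
  assumes "x \<in> V" "y \<in> V"
  shows "\<exists>t. (s ^^ t) x = y"
proof -
  obtain a b where "a < N" "b < N" "x = ph a" "y = ph b" using assms V_eq by blast
  then have "(s ^^ (b + N - a)) x = y" by (simp add: funpow_s_ph)
  then show ?thesis ..
qed

definition exits :: "vert set \<Rightarrow> vert set" where
  "exits P = {x \<in> P. s x \<notin> P}"

lemma induced_edges_subset:
  assumes "P \<subseteq> V"
  shows "induced_edges P \<subseteq> (\<lambda>x. {x, s x}) ` (P - exits P)"
proof
  fix e assume "e \<in> induced_edges P"
  then obtain u v where e: "e = {u, v}" "u \<in> P" "v \<in> P" "grid_adj u v"
    unfolding induced_edges_def by blast
  then have "v = s u \<or> u = s v" using adj_imp_s assms by blast
  then show "e \<in> (\<lambda>x. {x, s x}) ` (P - exits P)"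
    using e unfolding exits_def by (auto simp: insert_commute)
qed

lemma card_induced_edges_le:
  assumes "P \<subseteq> V"
  shows "card (induced_edges P) \<le> card P - card (exits P)"
proof -
  have fin: "finite P" using assms finite_V finite_subset by blast
  have "card (induced_edges P) \<le> card ((\<lambda>x. {x, s x}) ` (P - exits P))"
    using induced_edges_subset[OF assms] fin by (intro card_mono) auto
  also have "\<dots> \<le> card (P - exits P)"
    by (rule card_image_le) (use fin in auto)
  also have "\<dots> = card P - card (exits P)"
    using fin by (intro card_Diff_subset) (auto simp: exits_def)
  finally show ?thesis .
qed

lemma exits_nonempty:
  assumes "P \<subseteq> V" "P \<noteq> {}" "P \<noteq> V"
  shows "exits P \<noteq> {}"
proof
  assume no_exit: "exits P = {}"
  obtain x y where "x \<in> P" "y \<in> V" "y \<notin> P" using assms by blast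
  moreover obtain t where "(s ^^ t) x = y" using s_reaches \<open>x \<in> P\<close> \<open>y \<in> V\<close> assms(1) by blast
  moreover have "z \<in> P \<Longrightarrow> s z \<in> P" for z
    using no_exit unfolding exits_def by blast
  then have "(s ^^ t') x \<in> P" for t'
    using \<open>x \<in> P\<close> by (induction t') auto
  ultimately show False by metis
qed

lemma spanning_tree_of_proper_subset:
  assumes P: "P \<subseteq> V" "P \<noteq> {}" "P \<noteq> V" and F: "F \<in> spanning_trees P"
  shows "F = induced_edges P" "card (exits P) = 1"
proof -
  have fin: "finite P" using P finite_V finite_subset by blast
  have F_sub: "F \<subseteq> induced_edges P" and card_F: "card F = card P - 1"
    using F unfolding spanning_trees_def by auto
  have "card F \<le> card (induced_edges P)"
    using F_sub by (intro card_mono finite_induced_edges fin)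
  moreover have "1 \<le> card (exits P)"
    using exits_nonempty[OF P] fin by (simp add: Suc_le_eq card_gt_0_iff exits_def)
  moreover have "card (exits P) \<le> card P"
    using fin by (intro card_mono) (auto simp: exits_def)
  moreover have "1 \<le> card P" using fin P(2) by (simp add: Suc_le_eq card_gt_0_iff)
  ultimately have "card F = card (induced_edges P)" "card (exits P) = 1"
    using card_F card_induced_edges_le[OF P(1)] by linarith+
  then show "F = induced_edges P" "card (exits P) = 1"
    using card_seteq[OF finite_induced_edges[OF fin] F_sub] by auto
qed

lemma num_spanning_trees_le_1:
  assumes "P \<subseteq> V" "P \<noteq> {}" "P \<noteq> V"
  shows "num_spanning_trees P \<le> 1"
proof -
  have "spanning_trees P \<subseteq> {induced_edges P}"
    using spanning_tree_of_proper_subset(1)[OF assms] by blast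
  then show ?thesis
    unfolding num_spanning_trees_def using card_mono[of "{induced_edges P}"] by simp
qed

lemma card_exits_eq_1:
  assumes "P \<subseteq> V" "P \<noteq> {}" "P \<noteq> V" "0 < num_spanning_trees P"
  shows "card (exits P) = 1"
proof -
  obtain F where "F \<in> spanning_trees P"
    using assms(4) unfolding num_spanning_trees_def by (auto simp: card_gt_0_iff)
  then show ?thesis using spanning_tree_of_proper_subset(2) assms by blast
qed

lemma arc_has_spanning_tree:
  assumes "a < b" "b \<le> N"
  shows "0 < num_spanning_trees (ph ` {a..<b})"
proof -
  have "inj_on ph {a..<b}" by (rule inj_on_subset[OF inj_ph]) (use assms in auto)
  moreover have "grid_adj (ph c) (ph (Suc c))" if "Suc c < b" for c
    using adj_s[of "ph c"] s_ph[of c] that assms V_eq by auto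
  ultimately have "spanning_trees (ph ` {a..<b}) \<noteq> {}"
    using path_spanning_tree by blast
  then show ?thesis
    unfolding num_spanning_trees_def by (simp add: card_gt_0_iff finite_spanning_trees)
qed

definition arc_partition :: "nat \<Rightarrow> nat \<Rightarrow> vert set" where
  "arc_partition k i = (if i < k then ph ` {i * (N div k)..<Suc i * (N div k)} else {})"

lemma arc_partition_balanced:
  assumes "0 < N" "k dvd N"
  shows "arc_partition k \<in> balanced_partitions V k"
proof -
  obtain L where "N = k * L" using assms(2) by (rule dvdE)
  then have "0 < L" "N div k = L" using assms(1) by auto
  define I where "I i = {x. x div L = i}" for i
  have I_sub: "I i \<subseteq> {..<N}" if "i < k" for i
    using that \<open>0 < L\<close> \<open>N = k * L\<close> by (auto simp: I_def div_less_iff_less_mult)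
  have arc: "arc_partition k i = (if i < k then ph ` I i else {})" for i
    unfolding arc_partition_def \<open>N div k = L\<close> I_def interval_eq_div[OF \<open>0 < L\<close>] ..
  have card_arc: "card (arc_partition k i) = L" if "i < k" for i
    using that arc card_image[OF inj_on_subset[OF inj_ph I_sub[OF that]]]
    by (simp add: I_def interval_eq_div[OF \<open>0 < L\<close>, symmetric])
  have "(\<Union>i<k. arc_partition k i) = (\<Union>i<k. ph ` I i)"
    by (rule SUP_cong) (simp_all add: arc)
  also have "\<dots> = ph ` {x. x div L < k}"
    by (auto simp: I_def)
  also have "\<dots> = ph ` {..<N}"
    using \<open>0 < L\<close> \<open>N = k * L\<close> by (simp add: div_less_iff_less_mult lessThan_def)
  finally have "(\<Union>i<k. arc_partition k i) = V"
    by (simp add: V_eq)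
  moreover have "arc_partition k i \<inter> arc_partition k j = {}" if "i < k" "j < k" "i \<noteq> j" for i j
  proof -
    have "I i \<inter> I j = {}" using \<open>i \<noteq> j\<close> by (auto simp: I_def)
    then show ?thesis
      using that inj_on_image_Int[OF inj_ph I_sub I_sub, of i j] by (simp add: arc)
  qed
  moreover have "arc_partition k i \<noteq> {}" if "i < k" for i
    using card_arc[OF that] \<open>0 < L\<close> by auto
  moreover have "arc_partition k i = {}" if "k \<le> i" for i
    using that by (simp add: arc_partition_def)
  ultimately have "arc_partition k \<in> partitions V k"
    by (simp add: partitions_def)
  then show ?thesis
    using card_arc unfolding balanced_partitions_def by simp
qed

lemma Z_balanced_ge_1:
  assumes "0 < N" "k dvd N"
  shows "1 \<le> Z_balanced V k"
proof -
  obtain L where "N = k * L" using assms(2) by (rule dvdE)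
  then have "0 < L" "N div k = L" using assms(1) by auto
  have "1 \<le> st_weight k (arc_partition k)"
    unfolding st_weight_def
  proof (rule prod_ge_1)
    fix i assume "i \<in> {..<k}"
    then have "i * L < Suc i * L" "Suc i * L \<le> N"
      using \<open>0 < L\<close> \<open>N = k * L\<close> mult_le_mono1[of "Suc i" k L] by auto
    then have "0 < num_spanning_trees (arc_partition k i)"
      using arc_has_spanning_tree \<open>i \<in> {..<k}\<close> \<open>N div k = L\<close> by (simp add: arc_partition_def)
    then show "1 \<le> real (num_spanning_trees (arc_partition k i))" by simp
  qed
  also have "\<dots> \<le> Z_balanced V k"
  proof -
    have "finite (balanced_partitions V k)"
      unfolding balanced_partitions_def
      by (rule finite_subset[OF _ finite_partitions[OF finite_V]]) auto
    then show ?thesis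
      unfolding Z_balanced_def
      by (intro member_le_sum arc_partition_balanced[OF assms] st_weight_nonneg)
  qed
  finally show ?thesis .
qed

definition tree_partitions :: "nat \<Rightarrow> (nat \<Rightarrow> vert set) set" where
  "tree_partitions k = {p \<in> partitions V k. \<forall>i<k. 0 < num_spanning_trees (p i)}"

lemma st_weight_eq_indicator:
  assumes "p \<in> partitions V k" "2 \<le> k"
  shows "st_weight k p = (if \<forall>i<k. 0 < num_spanning_trees (p i) then 1 else 0)"
proof (cases "\<forall>i<k. 0 < num_spanning_trees (p i)")
  case True
  have "num_spanning_trees (p i) \<le> 1" if "i < k" for i
    using num_spanning_trees_le_1 partition_block_proper[OF assms that] by blast
  then have "num_spanning_trees (p i) = 1" if "i < k" for i
    using True that by (simp add: le_antisym Suc_le_eq)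
  then show ?thesis using True unfolding st_weight_def by simp
next
  case False
  then show ?thesis unfolding st_weight_def by (auto intro: prod_zero)
qed

lemma Z_star_eq_card:
  assumes "2 \<le> k"
  shows "Z_star V k = card (tree_partitions k)"
proof -
  have "Z_star V k = (\<Sum>p\<in>partitions V k. if \<forall>i<k. 0 < num_spanning_trees (p i) then 1 else 0)"
    unfolding Z_star_def using assms by (intro sum.cong) (simp_all add: st_weight_eq_indicator)
  also have "\<dots> = (\<Sum>p\<in>tree_partitions k. 1)"
    unfolding tree_partitions_def by (simp add: finite_partitions finite_V flip: sum.inter_filter)
  finally show ?thesis by simp
qed

lemma tree_partitionsD:
  "p \<in> tree_partitions k \<Longrightarrow> p \<in> partitions V k"
  "p \<in> tree_partitions k \<Longrightarrow> i < k \<Longrightarrow> 0 < num_spanning_trees (p i)"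
  unfolding tree_partitions_def by blast+

definition block_exit :: "(nat \<Rightarrow> vert set) \<Rightarrow> nat \<Rightarrow> vert" where
  "block_exit p i = the_elem (exits (p i))"

lemma exits_block:
  assumes p: "p \<in> tree_partitions k" and "2 \<le> k" "i < k"
  shows "exits (p i) = {block_exit p i}"
proof -
  have "card (exits (p i)) = 1"
    by (rule card_exits_eq_1[OF partition_block_proper[OF tree_partitionsD(1)[OF p] \<open>2 \<le> k\<close> \<open>i < k\<close>]
          tree_partitionsD(2)[OF p \<open>i < k\<close>]])
  then obtain x where "exits (p i) = {x}" by (auto simp: card_1_singleton_iff)
  then show ?thesis by (simp add: block_exit_def)
qed

lemma block_exit_in_block:
  assumes "p \<in> tree_partitions k" "2 \<le> k" "i < k"
  shows "block_exit p i \<in> p i"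
proof -
  have "block_exit p i \<in> exits (p i)" using exits_block[OF assms] by simp
  then show ?thesis by (simp add: exits_def)
qed

lemma block_exits_Int_block:
  assumes p: "p \<in> tree_partitions k" and "2 \<le> k" "i < k"
  shows "block_exit p ` {..<k} \<inter> p i = {block_exit p i}"
proof
  have "block_exit p j \<notin> p i" if "j < k" "j \<noteq> i" for j
    using block_exit_in_block[OF p \<open>2 \<le> k\<close> \<open>j < k\<close>]
      partition_disjoint[OF tree_partitionsD(1)[OF p] \<open>i < k\<close> \<open>j < k\<close>] that(2)
    by blast
  then show "block_exit p ` {..<k} \<inter> p i \<subseteq> {block_exit p i}" by blast
  show "{block_exit p i} \<subseteq> block_exit p ` {..<k} \<inter> p i"
    using block_exit_in_block[OF assms] \<open>i < k\<close> by simp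
qed

text \<open>Walking along the cycle from a vertex, the first block exit met is the exit of its own
  block; hence the exits determine the partition.\<close>

lemma first_hit_block_exit:
  assumes p: "p \<in> tree_partitions k" and "2 \<le> k" "i < k" "v \<in> p i"
  shows "first_hit s (block_exit p ` {..<k}) v = block_exit p i"
proof -
  note block = partition_block_proper[OF tree_partitionsD(1)[OF p] \<open>2 \<le> k\<close> \<open>i < k\<close>]
  obtain w where "w \<in> V" "w \<notin> p i" using block by blast
  moreover obtain t where "(s ^^ t) v = w"
    using s_reaches \<open>w \<in> V\<close> \<open>v \<in> p i\<close> block(1) by blast
  ultimately have leaves: "(s ^^ t) v \<notin> p i" by simp
  have exits: "y \<in> block_exit p ` {..<k}" if "y \<in> p i" "s y \<notin> p i" for y
    using that exits_block[OF assms(1-3)] \<open>i < k\<close> unfolding exits_def by blast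
  show ?thesis
    by (rule first_hit_eq[OF \<open>v \<in> p i\<close> leaves exits block_exits_Int_block[OF assms(1-3)]])
qed

lemma tree_partition_block_eq:
  assumes p: "p \<in> tree_partitions k" and "2 \<le> k" "i < k"
  shows "p i = {v \<in> V. first_hit s (block_exit p ` {..<k}) v = block_exit p i}"
proof (intro set_eqI iffI)
  fix v
  assume "v \<in> p i"
  moreover have "p i \<subseteq> V"
    by (rule partition_block_proper(1)[OF tree_partitionsD(1)[OF p] \<open>2 \<le> k\<close> \<open>i < k\<close>])
  ultimately show "v \<in> {v \<in> V. first_hit s (block_exit p ` {..<k}) v = block_exit p i}"
    using first_hit_block_exit[OF assms \<open>v \<in> p i\<close>] by auto
next
  fix v
  assume v: "v \<in> {v \<in> V. first_hit s (block_exit p ` {..<k}) v = block_exit p i}"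
  then have "v \<in> V" by simp
  then obtain j where "j < k" "v \<in> p j"
    using partition_covers[OF tree_partitionsD(1)[OF p]] by blast
  have "first_hit s (block_exit p ` {..<k}) v = block_exit p j"
    by (rule first_hit_block_exit[OF p \<open>2 \<le> k\<close> \<open>j < k\<close> \<open>v \<in> p j\<close>])
  with v have same_exit: "block_exit p j = block_exit p i" by simp
  have "j = i"
  proof (rule ccontr)
    assume "j \<noteq> i"
    then have "p j \<inter> p i = {}"
      by (rule partition_disjoint[OF tree_partitionsD(1)[OF p] \<open>j < k\<close> \<open>i < k\<close>])
    moreover have "block_exit p i \<in> p j \<inter> p i"
      using block_exit_in_block[OF p \<open>2 \<le> k\<close> \<open>j < k\<close>] block_exit_in_block[OF assms] same_exit
      by simp
    ultimately show False by simp
  qed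
  then show "v \<in> p i" using \<open>v \<in> p j\<close> by simp
qed

lemma card_tree_partitions_le:
  assumes "2 \<le> k"
  shows "card (tree_partitions k) \<le> N ^ k"
proof -
  define f where "f p = restrict (block_exit p) {..<k}" for p
  have "inj_on f (tree_partitions k)"
  proof (rule inj_onI)
    fix p q assume p: "p \<in> tree_partitions k" and q: "q \<in> tree_partitions k" and "f p = f q"
    have exit_eq: "block_exit p i = block_exit q i" if "i < k" for i
      using fun_cong[OF \<open>f p = f q\<close>, of i] that by (simp add: f_def)
    then have "block_exit p ` {..<k} = block_exit q ` {..<k}"
      by (intro image_cong) auto
    then have "p i = q i" if "i < k" for i
      using tree_partition_block_eq[OF p assms that] tree_partition_block_eq[OF q assms that]
        exit_eq[OF that]
      by simp
    moreover have "p i = q i" if "\<not> i < k" for i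
      using that partition_beyond[OF tree_partitionsD(1)[OF p]]
        partition_beyond[OF tree_partitionsD(1)[OF q]]
      by (simp add: not_less)
    ultimately show "p = q" by blast
  qed
  moreover have "f p \<in> PiE {..<k} (\<lambda>_. V)" if "p \<in> tree_partitions k" for p
    using block_exit_in_block[OF that assms]
      partition_block_proper(1)[OF tree_partitionsD(1)[OF that] assms]
    unfolding f_def by auto
  ultimately have "card (tree_partitions k) \<le> card (PiE {..<k} (\<lambda>_. V))"
    by (intro card_inj_on_le finite_PiE finite_V) auto
  then show ?thesis by (simp add: card_PiE card_V)
qed

theorem balanced_fraction_ge:
  assumes "0 < N" "k dvd N"
  shows "1 / real N ^ k \<le> Z_balanced V k / Z_star V k"
proof -
  have bal: "1 \<le> Z_balanced V k" by (rule Z_balanced_ge_1[OF assms])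
  have bal_star: "Z_balanced V k \<le> Z_star V k" by (rule Z_balanced_le_Z_star[OF finite_V])
  have "0 < k" using assms by (cases k) auto
  then consider "k = 1" | "2 \<le> k" by linarith
  then show ?thesis
  proof cases
    case 1
    then have "Z_balanced V k / Z_star V k = 1" using bal Z_balanced_1[of V] by simp
    moreover have "1 / real N ^ k \<le> 1" using \<open>0 < N\<close> by simp
    ultimately show ?thesis by simp
  next
    case 2
    have "Z_star V k \<le> real N ^ k"
      using card_tree_partitions_le[OF 2]
      by (simp add: Z_star_eq_card[OF 2] flip: of_nat_power)
    then have "1 / real N ^ k \<le> 1 / Z_star V k"
      using bal bal_star \<open>0 < N\<close> by (intro divide_left_mono mult_pos_pos) auto
    also have "\<dots> \<le> Z_balanced V k / Z_star V k"
      using bal bal_star by (intro divide_right_mono) auto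
    finally show ?thesis .
  qed
qed

end

section \<open>The grid with a hole is an induced cycle\<close>

text \<open>Walk around the boundary of the grid: along row 1, down column n, back along row m
  and up column 1.\<close>

definition grid_hole_enum :: "nat \<Rightarrow> nat \<Rightarrow> nat \<Rightarrow> vert" where
  "grid_hole_enum m n a =
     (if a < n - 1 then (1, a + 1)
      else if a < n + m - 2 then (a + 2 - n, n)
      else if a < 2*n + m - 3 then (m, 2*n + m - 2 - a)
      else (2*n + 2*m - 3 - a, 1))"

definition grid_hole_index :: "nat \<Rightarrow> nat \<Rightarrow> vert \<Rightarrow> nat" where
  "grid_hole_index m n v =
     (if fst v = 1 \<and> snd v < n then snd v - 1
      else if snd v = n \<and> fst v < m then n + fst v - 2
      else if fst v = m \<and> 1 < snd v then 2*n + m - 2 - snd v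
      else 2*n + 2*m - 3 - fst v)"

definition grid_hole_succ :: "nat \<Rightarrow> nat \<Rightarrow> vert \<Rightarrow> vert" where
  "grid_hole_succ m n v =
     (if fst v = 1 \<and> snd v < n then (1, snd v + 1)
      else if snd v = n \<and> fst v < m then (fst v + 1, n)
      else if fst v = m \<and> 1 < snd v then (m, snd v - 1)
      else (fst v - 1, 1))"

lemma grid_hole_enum_cases:
  assumes "4 \<le> m" "4 \<le> n" "a < 2*m + 2*n - 4"
  obtains "a < n - 1" "grid_hole_enum m n a = (1, a + 1)"
  | "n - 1 \<le> a" "a < n + m - 2" "grid_hole_enum m n a = (a + 2 - n, n)"
  | "n + m - 2 \<le> a" "a < 2*n + m - 3" "grid_hole_enum m n a = (m, 2*n + m - 2 - a)"
  | "2*n + m - 3 \<le> a" "grid_hole_enum m n a = (2*n + 2*m - 3 - a, 1)"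
proof (cases "a < n - 1")
  case True then show ?thesis using that(1) by (simp add: grid_hole_enum_def)
next
  case F1: False
  show ?thesis
  proof (cases "a < n + m - 2")
    case True then show ?thesis using that(2) F1 by (simp add: grid_hole_enum_def)
  next
    case F2: False
    show ?thesis
    proof (cases "a < 2*n + m - 3")
      case True then show ?thesis using that(3) F1 F2 by (simp add: grid_hole_enum_def)
    next
      case F3: False
      then show ?thesis using that(4) F1 F2 by (simp add: grid_hole_enum_def)
    qed
  qed
qed

lemma grid_hole_index_enum:
  assumes "4 \<le> m" "4 \<le> n" "a < 2*m + 2*n - 4"
  shows "grid_hole_enum m n a \<in> grid_hole_V m n \<and> grid_hole_index m n (grid_hole_enum m n a) = a"
  by (rule grid_hole_enum_cases[OF assms])
     (use assms in \<open>auto simp: grid_hole_V_def grid_hole_index_def\<close>)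

lemma grid_hole_enum_index:
  assumes "4 \<le> m" "4 \<le> n" "v \<in> grid_hole_V m n"
  shows "grid_hole_index m n v < 2*m + 2*n - 4 \<and> grid_hole_enum m n (grid_hole_index m n v) = v"
proof -
  obtain i j where v: "v = (i, j)" by fastforce
  have "1 \<le> i" "i \<le> m" "1 \<le> j" "j \<le> n" "i = 1 \<or> i = m \<or> j = 1 \<or> j = n"
    using assms unfolding v grid_hole_V_def by auto
  then consider "i = 1" "j < n" | "j = n" "i < m" | "i = m" "1 < j" | "j = 1" "1 < i"
    using assms(1,2) by (auto simp: le_less)
  then show ?thesis
    using assms(1,2) \<open>1 \<le> i\<close> \<open>i \<le> m\<close> \<open>1 \<le> j\<close> \<open>j \<le> n\<close>
    by cases (auto simp: v grid_hole_index_def grid_hole_enum_def)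
qed

lemma grid_hole_succ_enum:
  assumes "4 \<le> m" "4 \<le> n" "a < 2*m + 2*n - 4"
  shows "grid_hole_succ m n (grid_hole_enum m n a) = grid_hole_enum m n (Suc a mod (2*m + 2*n - 4))"
proof -
  have mod_eq: "Suc a mod (2*m + 2*n - 4) = (if Suc a = 2*m + 2*n - 4 then 0 else Suc a)"
    using assms by auto
  show ?thesis unfolding mod_eq
    by (rule grid_hole_enum_cases[OF assms])
       (use assms in \<open>auto simp: grid_hole_succ_def grid_hole_enum_def\<close>)
qed

lemma grid_adj_grid_hole_succ:
  assumes "4 \<le> m" "4 \<le> n" "v \<in> grid_hole_V m n"
  shows "grid_adj v (grid_hole_succ m n v)"
  using assms unfolding grid_hole_V_def grid_hole_succ_def grid_adj_def by (cases v) auto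

lemma grid_hole_succ_row:
  assumes "4 \<le> m" "4 \<le> n" "(i, j) \<in> grid_hole_V m n" "(i, Suc j) \<in> grid_hole_V m n"
  shows "grid_hole_succ m n (i, j) = (i, Suc j) \<or> grid_hole_succ m n (i, Suc j) = (i, j)"
  using assms by (auto simp: grid_hole_V_def grid_hole_succ_def)

lemma grid_hole_succ_column:
  assumes "4 \<le> m" "4 \<le> n" "(i, j) \<in> grid_hole_V m n" "(Suc i, j) \<in> grid_hole_V m n"
  shows "grid_hole_succ m n (i, j) = (Suc i, j) \<or> grid_hole_succ m n (Suc i, j) = (i, j)"
  using assms by (auto simp: grid_hole_V_def grid_hole_succ_def)

lemma grid_adj_imp_grid_hole_succ:
  assumes "4 \<le> m" "4 \<le> n" "u \<in> grid_hole_V m n" "v \<in> grid_hole_V m n" "grid_adj u v"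
  shows "v = grid_hole_succ m n u \<or> u = grid_hole_succ m n v"
proof -
  obtain i j i' j' where uv: "u = (i, j)" "v = (i', j')" by fastforce
  from assms(5) consider "i' = i" "j' = Suc j" | "i = i'" "j = Suc j'" | "j' = j" "i' = Suc i" | "j = j'" "i = Suc i'"
    unfolding uv grid_adj_def by auto
  then show ?thesis
    using grid_hole_succ_row[OF assms(1,2)] grid_hole_succ_column[OF assms(1,2)] assms(3,4)
    unfolding uv by cases metis+
qed

lemma grid_hole_induced_cycle:
  assumes "4 \<le> m" "4 \<le> n"
  shows "induced_grid_cycle (grid_hole_V m n) (2*m + 2*n - 4)
           (grid_hole_enum m n) (grid_hole_succ m n)"
proof
  show "bij_betw (grid_hole_enum m n) {..<2*m + 2*n - 4} (grid_hole_V m n)"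
    by (rule bij_betw_byWitness[where f' = "grid_hole_index m n"])
       (use grid_hole_index_enum[OF assms] grid_hole_enum_index[OF assms] in auto)
  show "grid_hole_succ m n (grid_hole_enum m n a) = grid_hole_enum m n (Suc a mod (2*m + 2*n - 4))"
    if "a < 2*m + 2*n - 4" for a
    using grid_hole_succ_enum[OF assms that] .
  show "grid_adj v (grid_hole_succ m n v)" if "v \<in> grid_hole_V m n" for v
    using grid_adj_grid_hole_succ[OF assms that] .
  show "v = grid_hole_succ m n u \<or> u = grid_hole_succ m n v"
    if "u \<in> grid_hole_V m n" "v \<in> grid_hole_V m n" "grid_adj u v" for u v
    using grid_adj_imp_grid_hole_succ[OF assms that] .
qed

lemma grid_hole_balanced_fraction_ge:
  assumes "4 \<le> m" "4 \<le> n" "k dvd card (grid_hole_V m n)"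
  shows "1 / (real (m + n) ^ k * 2 ^ k) \<le> Z_balanced (grid_hole_V m n) k / Z_star (grid_hole_V m n) k"
proof -
  interpret induced_grid_cycle "grid_hole_V m n" "2*m + 2*n - 4" "grid_hole_enum m n" "grid_hole_succ m n"
    using grid_hole_induced_cycle assms(1,2) .
  have "real (2*m + 2*n - 4) ^ k \<le> real (m + n) ^ k * 2 ^ k"
    unfolding power_mult_distrib[symmetric] using assms(1) by (intro power_mono) auto
  then have "1 / (real (m + n) ^ k * 2 ^ k) \<le> 1 / real (2*m + 2*n - 4) ^ k"
    using assms(1) by (intro divide_left_mono mult_pos_pos) auto
  also have "\<dots> \<le> Z_balanced (grid_hole_V m n) k / Z_star (grid_hole_V m n) k"
    by (rule balanced_fraction_ge) (use assms card_V in auto)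
  finally show ?thesis .
qed

theorem theorem5p3:
  shows "\<exists>c > 0. \<exists>C > 0. \<forall>m n k :: nat.
           4 \<le> m \<longrightarrow> 4 \<le> n \<longrightarrow> 1 \<le> k \<longrightarrow> k dvd card (grid_hole_V m n) \<longrightarrow>
           Z_balanced (grid_hole_V m n) k / Z_star (grid_hole_V m n) k
             \<ge> c / (real (m + n) ^ k * C ^ k)"
proof (rule exI[of _ 1], intro conjI exI[of _ 2] allI impI)
  fix m n k :: nat
  assume "4 \<le> m" "4 \<le> n" "1 \<le> k" "k dvd card (grid_hole_V m n)"
  show "Z_balanced (grid_hole_V m n) k / Z_star (grid_hole_V m n) k
      \<ge> 1 / (real (m + n) ^ k * 2 ^ k)"
    by (rule grid_hole_balanced_fraction_ge) fact+
qed simp_all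

end
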